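(* Let $G$ be a finite group and $H$ a subgroup such that $\mathcal{O}_G(H)$ is Boolean. If there are $K,L\in\mathcal{O}_G(H)$ with $K<L$ and $|L:K|=2$, then there is an atom $A$ of $\mathcal{O}_G(H)$ such that $L=K\vee A$ and $|G:A^{\complement}|=2$.
   Context: $\mathcal{O}_G(H)=\{K\mid H\le K\le G\}$ with $\vee$ the subgroup generated; Boolean means isomorphic to the lattice of subsets of a finite set. An atom is a minimal element of $\mathcal{O}_G(H)\setminus\{H\}$; $A^{\complement}$ is the lattice complement of $A$ (so $A\wedge A^{\complement}=H$, $A\vee A^{\complement}=G$). *)

theory Defs
  imports "HOL-Algebra.Algebra"
begin

definition overgroups :: "('a, 'b) monoid_scheme \<Rightarrow> 'a set \<Rightarrow> 'a set set" where
  "overgroups G H = {K. subgroup K G \<and> H \<subseteq> K}"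

definition sg_join :: "('a, 'b) monoid_scheme \<Rightarrow> 'a set \<Rightarrow> 'a set \<Rightarrow> 'a set" where
  "sg_join G K L = generate G (K \<union> L)"

text \<open>Boolean: order-isomorphic (hence lattice-isomorphic) to the subset lattice of a
  finite set; every finite set is in bijection with some {..<n}.\<close>
definition boolean_interval :: "('a, 'b) monoid_scheme \<Rightarrow> 'a set \<Rightarrow> bool" where
  "boolean_interval G H \<longleftrightarrow> (\<exists>(n::nat) f. bij_betw f (overgroups G H) (Pow {..<n}) \<and>
      (\<forall>K\<in>overgroups G H. \<forall>L\<in>overgroups G H. K \<subseteq> L \<longleftrightarrow> f K \<subseteq> f L))"

definition is_atom :: "('a, 'b) monoid_scheme \<Rightarrow> 'a set \<Rightarrow> 'a set \<Rightarrow> bool" where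
  "is_atom G H A \<longleftrightarrow> A \<in> overgroups G H \<and> A \<noteq> H \<and>
      (\<forall>K\<in>overgroups G H. K \<noteq> H \<and> K \<subseteq> A \<longrightarrow> K = A)"

definition is_complement :: "('a, 'b) monoid_scheme \<Rightarrow> 'a set \<Rightarrow> 'a set \<Rightarrow> 'a set \<Rightarrow> bool" where
  "is_complement G H A B \<longleftrightarrow> B \<in> overgroups G H \<and> A \<inter> B = H \<and> sg_join G A B = carrier G"

definition sg_index :: "('a, 'b) monoid_scheme \<Rightarrow> 'a set \<Rightarrow> 'a set \<Rightarrow> nat" where
  "sg_index G L K = card (rcosets\<^bsub>G\<lparr>carrier := L\<rparr>\<^esub> K)"

end

theory Submission
  imports Defs
begin

text \<open>Let f be an order isomorphism of O_G(H) onto the subsets of I. Since |L:K| = 2 there is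
  no subgroup strictly between K and L, so f L = f K + {i} for a single i: the atom
  A = f^-1 {i} satisfies L = K \<squnion> A, and its complement B = f^-1 (I - {i}) is a maximal
  subgroup with K \<subseteq> B and L \<inter> B = K. Pick x in L - K. As K is normal in L, the
  conjugate x B x^-1 is again a maximal subgroup containing H, and it does not contain A
  (else it would contain L, hence x, forcing x \<in> B). But B is the only coatom of O_G(H)
  not above A, so x normalises B. Since also x^2 \<in> K \<subseteq> B, the set B \<union> Bx is a subgroup
  containing A and B, hence equal to G, and |G:B| = 2.\<close>

definition maximal_subgroup :: "('a, 'b) monoid_scheme \<Rightarrow> 'a set \<Rightarrow> bool" where
  "maximal_subgroup G M \<longleftrightarrow> subgroup M G \<and> M \<noteq> carrier G \<and>
      (\<forall>U. subgroup U G \<and> M \<subseteq> U \<longrightarrow> U = M \<or> U = carrier G)"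

context group begin

lemma inv_mult_cancel_left [simp]:
  "x \<in> carrier G \<Longrightarrow> y \<in> carrier G \<Longrightarrow> inv x \<otimes> (x \<otimes> y) = y"
  by (simp add: m_assoc[symmetric])

lemma mult_inv_cancel_left [simp]:
  "x \<in> carrier G \<Longrightarrow> y \<in> carrier G \<Longrightarrow> x \<otimes> (inv x \<otimes> y) = y"
  by (simp add: m_assoc[symmetric])

lemma rcosets_in_subgroup:
  "rcosets\<^bsub>G\<lparr>carrier := L\<rparr>\<^esub> K = (\<lambda>a. K #> a) ` L"
  by (auto simp: RCOSETS_def r_coset_def)

lemma sg_index_eq_two_iff:
  assumes K: "subgroup K G" and L: "subgroup L G" and "K \<subseteq> L" and x: "x \<in> L" "x \<notin> K"
  shows "sg_index G L K = 2 \<longleftrightarrow> L = K \<union> (K #> x)"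
proof -
  have Kc: "K \<subseteq> carrier G" and xc: "x \<in> carrier G"
    using K L x subgroup.subset by blast+
  have distinct: "K \<noteq> K #> x"
    using rcos_self[OF xc K] x(2) by blast
  have cosets_in: "{K, K #> x} \<subseteq> (\<lambda>a. K #> a) ` L"
    using coset_mult_one[OF Kc] subgroup.one_closed[OF L] x(1)
    by (metis empty_subsetI image_eqI insert_subset)
  have cosets_sub: "K #> a \<subseteq> L" if "a \<in> L" for a
    using that \<open>K \<subseteq> L\<close> subgroup.m_closed[OF L] by (auto simp: r_coset_def)
  show ?thesis
    unfolding sg_index_def rcosets_in_subgroup
  proof
    assume "card ((\<lambda>a. K #> a) ` L) = 2"
    then have cosets: "(\<lambda>a. K #> a) ` L = {K, K #> x}"
      using cosets_in distinct card_subset_eq[of "(\<lambda>a. K #> a) ` L" "{K, K #> x}"]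
      by (simp add: card_ge_0_finite)
    have "a \<in> K \<union> (K #> x)" if "a \<in> L" for a
    proof -
      have "a \<in> K #> a"
        using rcos_self[OF _ K] that subgroup.subset[OF L] by blast
      moreover have "K #> a \<in> {K, K #> x}"
        using that cosets by blast
      ultimately show ?thesis by auto
    qed
    then show "L = K \<union> (K #> x)"
      using \<open>K \<subseteq> L\<close> cosets_sub[OF x(1)] by (intro equalityI subsetI) auto
  next
    assume L_eq: "L = K \<union> (K #> x)"
    have "K #> a \<in> {K, K #> x}" if "a \<in> L" for a
    proof (cases "a \<in> K")
      case True
      then show ?thesis using subgroup.rcos_const[OF K is_group] by simp
    next
      case False
      then have "a \<in> K #> x" using that L_eq by blast
      then show ?thesis using repr_independence[OF _ xc K] by simp
    qed
    then have "(\<lambda>a. K #> a) ` L = {K, K #> x}"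
      using cosets_in by blast
    then show "card ((\<lambda>a. K #> a) ` L) = 2"
      using distinct by simp
  qed
qed

lemma index_two_mult_mem:
  assumes K: "subgroup K G" and L: "subgroup L G" and "K \<subseteq> L" and "sg_index G L K = 2"
    and y: "y \<in> L" "y \<notin> K" and z: "z \<in> L" "z \<notin> K"
  shows "y \<otimes> z \<in> K"
proof -
  have zc: "z \<in> carrier G" using z L subgroup.subset by blast
  have "inv z \<in> L" "inv z \<notin> K"
    using z zc subgroup.m_inv_closed[OF L] subgroup.m_inv_closed[OF K, of "inv z"] by auto
  then have "L = K \<union> (K #> inv z)"
    using sg_index_eq_two_iff assms by blast
  then obtain k where "k \<in> K" "y = k \<otimes> inv z"
    using y by (auto simp: r_coset_def)
  moreover have "k \<in> carrier G" using \<open>k \<in> K\<close> K subgroup.subset by blast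
  ultimately show ?thesis using zc by (simp add: m_assoc)
qed

lemma index_two_no_intermediate:
  assumes K: "subgroup K G" and L: "subgroup L G" and "K \<subseteq> L" and "sg_index G L K = 2"
    and M: "subgroup M G" and "K \<subseteq> M" "M \<subseteq> L"
  shows "M = K \<or> M = L"
proof (rule disjCI)
  assume "M \<noteq> L"
  show "M = K"
  proof (rule ccontr)
    assume "M \<noteq> K"
    then obtain z where z: "z \<in> M" "z \<notin> K" using \<open>K \<subseteq> M\<close> by blast
    have "K #> z \<subseteq> M"
      using z \<open>K \<subseteq> M\<close> subgroup.m_closed[OF M] by (auto simp: r_coset_def)
    moreover have "L = K \<union> (K #> z)"
      using sg_index_eq_two_iff assms z by blast
    ultimately show False using \<open>K \<subseteq> M\<close> \<open>M \<subseteq> L\<close> \<open>M \<noteq> L\<close> by blast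
  qed
qed

lemma index_two_conj_mem:
  assumes K: "subgroup K G" and L: "subgroup L G" and "K \<subseteq> L" and "sg_index G L K = 2"
    and g: "g \<in> L" and k: "k \<in> K"
  shows "g \<otimes> k \<otimes> inv g \<in> K"
proof (cases "g \<in> K")
  case True
  then show ?thesis using k subgroup.m_closed[OF K] subgroup.m_inv_closed[OF K] by blast
next
  case False
  have gc: "g \<in> carrier G" and kc: "k \<in> carrier G"
    using g k K L subgroup.subset by blast+
  have "g \<otimes> k \<notin> K"
  proof
    assume "g \<otimes> k \<in> K"
    then have "g \<otimes> k \<otimes> inv k \<in> K"
      using k subgroup.m_closed[OF K] subgroup.m_inv_closed[OF K] by blast
    then show False using False gc kc by (simp add: m_assoc)
  qed
  moreover have "g \<otimes> k \<in> L" using g k \<open>K \<subseteq> L\<close> subgroup.m_closed[OF L] by blast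
  moreover have "inv g \<in> L" "inv g \<notin> K"
    using g False gc subgroup.m_inv_closed[OF L] subgroup.m_inv_closed[OF K, of "inv g"] by auto
  ultimately show ?thesis using index_two_mult_mem assms by blast
qed

lemma mem_conj_iff:
  assumes "g \<in> carrier G" "M \<subseteq> carrier G" "y \<in> carrier G"
  shows "y \<in> g <# M #> inv g \<longleftrightarrow> inv g \<otimes> y \<otimes> g \<in> M"
proof
  assume "y \<in> g <# M #> inv g"
  then obtain m where "m \<in> M" "y = g \<otimes> m \<otimes> inv g"
    by (auto simp: l_coset_def r_coset_def)
  moreover have "m \<in> carrier G" using \<open>m \<in> M\<close> assms(2) by blast
  ultimately show "inv g \<otimes> y \<otimes> g \<in> M"
    using assms(1) by (simp add: m_assoc)
next
  assume "inv g \<otimes> y \<otimes> g \<in> M"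
  moreover have "y = g \<otimes> (inv g \<otimes> y \<otimes> g) \<otimes> inv g"
    using assms by (simp add: m_assoc)
  ultimately show "y \<in> g <# M #> inv g"
    by (auto simp: l_coset_def r_coset_def)
qed

lemma conj_mono: "M \<subseteq> N \<Longrightarrow> g <# M #> h \<subseteq> g <# N #> h"
  by (auto simp: l_coset_def r_coset_def)

lemma conj_carrier:
  assumes "g \<in> carrier G"
  shows "g <# carrier G #> inv g = carrier G"
proof -
  have "g <# carrier G #> inv g \<subseteq> carrier G"
    using assms l_coset_subset_G r_coset_subset_G by simp
  then show ?thesis using mem_conj_iff[OF assms] assms by auto
qed

lemma maximal_subgroup_conj:
  assumes max: "maximal_subgroup G M" and g: "g \<in> carrier G"
  shows "maximal_subgroup G (g <# M #> inv g)"
proof -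
  have M: "subgroup M G" "M \<noteq> carrier G"
    and maximal: "\<And>U. subgroup U G \<Longrightarrow> M \<subseteq> U \<Longrightarrow> U = M \<or> U = carrier G"
    using max unfolding maximal_subgroup_def by blast+
  have unconj: "inv g <# (g <# U #> inv g) #> g = U" if "U \<subseteq> carrier G" for U
    using subgroup_conjugation_is_surj0[of "inv g" U] g that by simp
  have "g <# M #> inv g \<noteq> carrier G"
  proof
    assume "g <# M #> inv g = carrier G"
    then have "M = inv g <# carrier G #> g"
      using unconj[OF subgroup.subset[OF M(1)]] by simp
    then show False using conj_carrier[of "inv g"] g M(2) by simp
  qed
  moreover have "U = g <# M #> inv g \<or> U = carrier G"
    if U: "subgroup U G" "g <# M #> inv g \<subseteq> U" for U
  proof -
    have "M \<subseteq> inv g <# U #> g"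
      using conj_mono[OF U(2), of "inv g" g] unconj[OF subgroup.subset[OF M(1)]] by simp
    then have "inv g <# U #> g = M \<or> inv g <# U #> g = carrier G"
      using maximal subgroup_conjugation_is_surj1[OF g U(1)] by blast
    then show ?thesis
      using subgroup_conjugation_is_surj0[OF g subgroup.subset[OF U(1)]] conj_carrier[OF g] by auto
  qed
  ultimately show ?thesis
    unfolding maximal_subgroup_def using subgroup_conjugation_is_surj2[OF g M(1)] by blast
qed

lemma subgroup_Un_rcoset:
  assumes B: "subgroup B G" and x: "x \<in> carrier G"
    and normalizes: "x <# B #> inv x = B" and square: "x \<otimes> x \<in> B"
  shows "subgroup (B \<union> (B #> x)) G"
proof -
  have Bc: "B \<subseteq> carrier G" using B subgroup.subset by blast
  have conj_closed: "x \<otimes> b \<otimes> inv x \<in> B" if "b \<in> B" for b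
  proof -
    have "x \<otimes> b \<otimes> inv x \<in> x <# B #> inv x"
      using that by (auto simp: l_coset_def r_coset_def)
    then show ?thesis using normalizes by simp
  qed
  have mem: "y \<in> B #> x \<longleftrightarrow> (\<exists>b\<in>B. y = b \<otimes> x)" for y
    by (auto simp: r_coset_def)
  show ?thesis
  proof (rule subgroupI)
    show "B \<union> (B #> x) \<subseteq> carrier G" using Bc x r_coset_subset_G by blast
    show "B \<union> (B #> x) \<noteq> {}" using subgroup.one_closed[OF B] by blast
  next
    fix a assume "a \<in> B \<union> (B #> x)"
    then consider "a \<in> B" | b where "b \<in> B" "a = b \<otimes> x" using mem by blast
    then show "inv a \<in> B \<union> (B #> x)"
    proof cases
      case 1
      then show ?thesis using subgroup.m_inv_closed[OF B] by blast
    next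
      case (2 b)
      have bc: "b \<in> carrier G" using 2 Bc by blast
      have "inv a = inv (x \<otimes> x) \<otimes> (x \<otimes> inv b \<otimes> inv x) \<otimes> x"
        using 2 bc x by (simp add: m_assoc inv_mult_group)
      moreover have "inv (x \<otimes> x) \<otimes> (x \<otimes> inv b \<otimes> inv x) \<in> B"
        using square 2 conj_closed subgroup.m_inv_closed[OF B] subgroup.m_closed[OF B] by blast
      ultimately show ?thesis using mem by blast
    qed
  next
    fix a c assume "a \<in> B \<union> (B #> x)" "c \<in> B \<union> (B #> x)"
    then consider (BB) "a \<in> B" "c \<in> B"
      | (BR) b where "a \<in> B" "b \<in> B" "c = b \<otimes> x"
      | (RB) b where "b \<in> B" "a = b \<otimes> x" "c \<in> B"
      | (RR) b b' where "b \<in> B" "a = b \<otimes> x" "b' \<in> B" "c = b' \<otimes> x"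
      using mem by blast
    then show "a \<otimes> c \<in> B \<union> (B #> x)"
    proof cases
      case BB
      then show ?thesis using subgroup.m_closed[OF B] by blast
    next
      case (BR b)
      then have "a \<otimes> c = (a \<otimes> b) \<otimes> x" using Bc x by (simp add: m_assoc subsetD)
      then show ?thesis using BR subgroup.m_closed[OF B] mem by blast
    next
      case (RB b)
      then have "a \<otimes> c = (b \<otimes> (x \<otimes> c \<otimes> inv x)) \<otimes> x"
        using Bc x by (simp add: m_assoc subsetD)
      then show ?thesis using RB conj_closed subgroup.m_closed[OF B] mem by blast
    next
      case (RR b b')
      then have "a \<otimes> c = b \<otimes> (x \<otimes> b' \<otimes> inv x) \<otimes> (x \<otimes> x)"
        using Bc x by (simp add: m_assoc subsetD)
      then show ?thesis using RR conj_closed square subgroup.m_closed[OF B] by auto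
    qed
  qed
qed


lemma overgroups_Int:
  "U \<in> overgroups G H \<Longrightarrow> V \<in> overgroups G H \<Longrightarrow> U \<inter> V \<in> overgroups G H"
  by (auto simp: overgroups_def intro: subgroups_Inter_pair)

lemma sg_join_upper: "U \<subseteq> sg_join G U V" "V \<subseteq> sg_join G U V"
  by (auto simp: sg_join_def intro: generate.incl)

lemma sg_join_least:
  "subgroup W G \<Longrightarrow> U \<subseteq> W \<Longrightarrow> V \<subseteq> W \<Longrightarrow> sg_join G U V \<subseteq> W"
  unfolding sg_join_def by (rule generate_subgroup_incl) auto

lemma sg_join_in_overgroups:
  assumes "U \<in> overgroups G H" "V \<in> overgroups G H"
  shows "sg_join G U V \<in> overgroups G H"
proof -
  have "U \<union> V \<subseteq> carrier G"
    using assms subgroup.subset by (auto simp: overgroups_def)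
  then show ?thesis
    using assms sg_join_upper(1)[of U V] generate_is_subgroup
    by (auto simp: overgroups_def sg_join_def)
qed

end

locale boolean_overgroups = group G for G (structure) +
  fixes H :: "'a set" and I :: "'i set" and f :: "'a set \<Rightarrow> 'i set"
  assumes subgroup_H: "subgroup H G"
    and bij_f: "bij_betw f (overgroups G H) (Pow I)"
    and f_subset_f_iff: "\<lbrakk>U \<in> overgroups G H; V \<in> overgroups G H\<rbrakk> \<Longrightarrow> f U \<subseteq> f V \<longleftrightarrow> U \<subseteq> V"
begin

definition overgroup_of :: "'i set \<Rightarrow> 'a set" where
  "overgroup_of S = the_inv_into (overgroups G H) f S"

lemma overgroup_of_in_overgroups: "S \<subseteq> I \<Longrightarrow> overgroup_of S \<in> overgroups G H"
  unfolding overgroup_of_def using bij_f bij_betw_the_inv_into bij_betwE by blast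

lemma f_overgroup_of: "S \<subseteq> I \<Longrightarrow> f (overgroup_of S) = S"
  unfolding overgroup_of_def using bij_f f_the_inv_into_f_bij_betw by fastforce

lemma f_subset: "U \<in> overgroups G H \<Longrightarrow> f U \<subseteq> I"
  using bij_f bij_betwE by blast

lemma f_eq_f_iff: "U \<in> overgroups G H \<Longrightarrow> V \<in> overgroups G H \<Longrightarrow> f U = f V \<longleftrightarrow> U = V"
  using f_subset_f_iff by blast

lemma H_in_overgroups: "H \<in> overgroups G H"
  using subgroup_H by (simp add: overgroups_def)

lemma carrier_in_overgroups: "carrier G \<in> overgroups G H"
  using subgroup_H subgroup_self subgroup.subset by (auto simp: overgroups_def)

lemma f_H: "f H = {}"
  using f_subset_f_iff[OF H_in_overgroups overgroup_of_in_overgroups[of "{}"]]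
    f_overgroup_of[of "{}"] overgroup_of_in_overgroups[of "{}"]
  by (auto simp: overgroups_def)

lemma f_carrier: "f (carrier G) = I"
proof -
  have "overgroup_of I \<subseteq> carrier G"
    using overgroup_of_in_overgroups[of I] subgroup.subset by (auto simp: overgroups_def)
  then have "I \<subseteq> f (carrier G)"
    using f_subset_f_iff[OF overgroup_of_in_overgroups[of I] carrier_in_overgroups]
      f_overgroup_of[of I] by simp
  then show ?thesis using f_subset[OF carrier_in_overgroups] by blast
qed

lemma f_Int:
  assumes U: "U \<in> overgroups G H" and V: "V \<in> overgroups G H"
  shows "f (U \<inter> V) = f U \<inter> f V"
proof -
  define W where "W = overgroup_of (f U \<inter> f V)"
  have "f U \<inter> f V \<subseteq> I" using f_subset[OF U] by blast
  then have W: "W \<in> overgroups G H" "f W = f U \<inter> f V"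
    unfolding W_def by (simp_all add: overgroup_of_in_overgroups f_overgroup_of)
  then have "W \<subseteq> U \<inter> V"
    using f_subset_f_iff[OF W(1) U] f_subset_f_iff[OF W(1) V] by blast
  then have "f U \<inter> f V \<subseteq> f (U \<inter> V)"
    using f_subset_f_iff[OF W(1) overgroups_Int[OF U V]] W(2) by simp
  moreover have "f (U \<inter> V) \<subseteq> f U \<inter> f V"
    using f_subset_f_iff[OF overgroups_Int[OF U V]] U V by blast
  ultimately show ?thesis by blast
qed

lemma f_sg_join:
  assumes U: "U \<in> overgroups G H" and V: "V \<in> overgroups G H"
  shows "f (sg_join G U V) = f U \<union> f V"
proof -
  define W where "W = overgroup_of (f U \<union> f V)"
  have "f U \<union> f V \<subseteq> I" using f_subset U V by blast
  then have W: "W \<in> overgroups G H" "f W = f U \<union> f V"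
    unfolding W_def by (simp_all add: overgroup_of_in_overgroups f_overgroup_of)
  then have "U \<subseteq> W" "V \<subseteq> W"
    using f_subset_f_iff[OF U W(1)] f_subset_f_iff[OF V W(1)] by blast+
  then have "sg_join G U V \<subseteq> W"
    using sg_join_least W(1) by (auto simp: overgroups_def)
  then have "f (sg_join G U V) \<subseteq> f U \<union> f V"
    using f_subset_f_iff[OF sg_join_in_overgroups[OF U V] W(1)] W(2) by simp
  moreover have "f U \<union> f V \<subseteq> f (sg_join G U V)"
    using f_subset_f_iff[OF _ sg_join_in_overgroups[OF U V]] U V sg_join_upper by blast
  ultimately show ?thesis by blast
qed

lemma f_covering:
  assumes U: "U \<in> overgroups G H" and V: "V \<in> overgroups G H" and "U \<subset> V"
    and no_between: "\<And>M. M \<in> overgroups G H \<Longrightarrow> U \<subseteq> M \<Longrightarrow> M \<subseteq> V \<Longrightarrow> M = U \<or> M = V"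
  obtains i where "i \<in> I" "i \<notin> f U" "f V = insert i (f U)"
proof -
  have "f U \<subset> f V"
    using \<open>U \<subset> V\<close> f_subset_f_iff[OF U V] f_eq_f_iff[OF U V] by blast
  then obtain i where i: "i \<in> f V" "i \<notin> f U" by blast
  have iI: "i \<in> I" using i f_subset[OF V] by blast
  define M where "M = overgroup_of (insert i (f U))"
  have "insert i (f U) \<subseteq> I" using f_subset[OF U] iI by blast
  then have M: "M \<in> overgroups G H" "f M = insert i (f U)"
    unfolding M_def by (simp_all add: overgroup_of_in_overgroups f_overgroup_of)
  have "U \<subseteq> M" "M \<subseteq> V"
    using M f_subset_f_iff[OF U M(1)] f_subset_f_iff[OF M(1) V] i \<open>f U \<subset> f V\<close> by auto
  then have "M = V"
    using no_between[OF M(1)] M(2) i(2) by auto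
  then show ?thesis using that iI i(2) M(2) by blast
qed

lemma is_atom_singleton:
  assumes "i \<in> I"
  shows "is_atom G H (overgroup_of {i})"
proof -
  let ?A = "overgroup_of {i}"
  have A: "?A \<in> overgroups G H" "f ?A = {i}"
    using assms by (simp_all add: overgroup_of_in_overgroups f_overgroup_of)
  have "U = ?A" if U: "U \<in> overgroups G H" "U \<noteq> H" "U \<subseteq> ?A" for U
  proof -
    have "f U \<subseteq> {i}" using f_subset_f_iff[OF U(1) A(1)] U(3) A(2) by simp
    moreover have "f U \<noteq> {}" using f_eq_f_iff[OF U(1) H_in_overgroups] f_H U(2) by simp
    ultimately have "f U = f ?A" using A(2) by (simp add: subset_singleton_iff)
    then show ?thesis using f_eq_f_iff[OF U(1) A(1)] by simp
  qed
  moreover have "?A \<noteq> H" using A(2) f_H by auto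
  ultimately show ?thesis unfolding is_atom_def using A(1) by simp
qed

lemma is_complement_singleton:
  assumes "i \<in> I"
  shows "is_complement G H (overgroup_of {i}) (overgroup_of (I - {i}))"
proof -
  let ?A = "overgroup_of {i}" and ?B = "overgroup_of (I - {i})"
  have A: "?A \<in> overgroups G H" "f ?A = {i}" and B: "?B \<in> overgroups G H" "f ?B = I - {i}"
    using assms by (simp_all add: overgroup_of_in_overgroups f_overgroup_of)
  have "?A \<inter> ?B = H"
    using f_eq_f_iff[OF overgroups_Int[OF A(1) B(1)] H_in_overgroups] f_Int[OF A(1) B(1)] A B f_H
    by simp
  moreover have "sg_join G ?A ?B = carrier G"
    using f_eq_f_iff[OF sg_join_in_overgroups[OF A(1) B(1)] carrier_in_overgroups]
      f_sg_join[OF A(1) B(1)] A B f_carrier assms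
    by auto
  ultimately show ?thesis unfolding is_complement_def using B(1) by blast
qed

lemma maximal_subgroup_complement:
  assumes "i \<in> I"
  shows "maximal_subgroup G (overgroup_of (I - {i}))"
proof -
  let ?B = "overgroup_of (I - {i})"
  have B: "?B \<in> overgroups G H" "f ?B = I - {i}"
    by (simp_all add: overgroup_of_in_overgroups f_overgroup_of)
  have "?B \<noteq> carrier G" using B(2) f_carrier assms by auto
  moreover have "U = ?B \<or> U = carrier G" if U: "subgroup U G" "?B \<subseteq> U" for U
  proof -
    have UO: "U \<in> overgroups G H" using U B(1) by (auto simp: overgroups_def)
    then have "I - {i} \<subseteq> f U" "f U \<subseteq> I"
      using f_subset_f_iff[OF B(1)] U(2) B(2) f_subset by auto
    then have "f U = f ?B \<or> f U = f (carrier G)" using B(2) f_carrier by blast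
    then show ?thesis using f_eq_f_iff[OF UO] B(1) carrier_in_overgroups by blast
  qed
  ultimately show ?thesis
    unfolding maximal_subgroup_def using B(1) by (auto simp: overgroups_def)
qed

lemma maximal_subgroup_eq_complement:
  assumes M: "maximal_subgroup G M" "H \<subseteq> M" and "i \<in> I"
    and "\<not> overgroup_of {i} \<subseteq> M"
  shows "M = overgroup_of (I - {i})"
proof -
  have MO: "M \<in> overgroups G H" using M by (simp add: maximal_subgroup_def overgroups_def)
  have "i \<notin> f M"
    using f_subset_f_iff[OF overgroup_of_in_overgroups MO] f_overgroup_of assms by auto
  then have "f M \<subseteq> I - {i}" using f_subset[OF MO] by blast
  then have "M \<subseteq> overgroup_of (I - {i})"
    using f_subset_f_iff[OF MO overgroup_of_in_overgroups[of "I - {i}"]] f_overgroup_of[of "I - {i}"]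
    by simp
  then show ?thesis
    using M(1) maximal_subgroup_complement[OF \<open>i \<in> I\<close>] unfolding maximal_subgroup_def by blast
qed

context
  fixes K L i
  assumes K: "K \<in> overgroups G H" and L: "L \<in> overgroups G H"
    and i: "i \<in> I" "i \<notin> f K" and fL: "f L = insert i (f K)"
begin

lemma L_eq_sg_join_atom: "L = sg_join G K (overgroup_of {i})"
proof -
  have A: "overgroup_of {i} \<in> overgroups G H" "f (overgroup_of {i}) = {i}"
    using i(1) by (simp_all add: overgroup_of_in_overgroups f_overgroup_of)
  then show ?thesis
    using f_eq_f_iff[OF L sg_join_in_overgroups[OF K A(1)]] f_sg_join[OF K A(1)] fL by simp
qed

lemma K_subset_L: "K \<subseteq> L"
  using f_subset_f_iff[OF K L] fL by auto

lemma atom_subset_L: "overgroup_of {i} \<subseteq> L"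
  using L_eq_sg_join_atom sg_join_upper(2) by simp

lemma K_subset_complement: "K \<subseteq> overgroup_of (I - {i})"
proof -
  have "f K \<subseteq> I - {i}" using f_subset[OF K] i(2) by blast
  then show ?thesis
    using f_subset_f_iff[OF K overgroup_of_in_overgroups[of "I - {i}"]] f_overgroup_of[of "I - {i}"]
    by simp
qed

lemma L_Int_complement: "L \<inter> overgroup_of (I - {i}) = K"
proof -
  have B: "overgroup_of (I - {i}) \<in> overgroups G H" "f (overgroup_of (I - {i})) = I - {i}"
    by (simp_all add: overgroup_of_in_overgroups f_overgroup_of)
  have "f (L \<inter> overgroup_of (I - {i})) = f K"
    using f_Int[OF L B(1)] fL B(2) f_subset[OF K] i(2) by auto
  then show ?thesis
    using f_eq_f_iff[OF overgroups_Int[OF L B(1)] K] by simp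
qed

context
  assumes index: "sg_index G L K = 2"
begin

lemma complement_conj_eq:
  assumes x: "x \<in> L" "x \<notin> K"
  shows "x <# overgroup_of (I - {i}) #> inv x = overgroup_of (I - {i})"
proof -
  define A where "A = overgroup_of {i}"
  define B where "B = overgroup_of (I - {i})"
  have sK: "subgroup K G" "H \<subseteq> K" and sL: "subgroup L G" and sB: "subgroup B G"
    using K L overgroup_of_in_overgroups[of "I - {i}"] by (simp_all add: overgroups_def B_def)
  have xc: "x \<in> carrier G" and Bc: "B \<subseteq> carrier G"
    using x sL sB subgroup.subset by blast+
  have "x \<notin> B" using L_Int_complement x unfolding B_def by blast
  have conj_K: "K \<subseteq> x <# B #> inv x"
  proof
    fix k assume "k \<in> K"
    then have "inv x \<otimes> k \<otimes> inv (inv x) \<in> K"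
      using index_two_conj_mem[OF sK(1) sL K_subset_L index subgroup.m_inv_closed[OF sL x(1)]]
      by blast
    then have "inv x \<otimes> k \<otimes> x \<in> B" using K_subset_complement xc unfolding B_def by auto
    moreover have "k \<in> carrier G" using \<open>k \<in> K\<close> subgroup.subset[OF sK(1)] by blast
    ultimately show "k \<in> x <# B #> inv x" using mem_conj_iff[OF xc Bc] by simp
  qed
  have conj_A: "\<not> A \<subseteq> x <# B #> inv x"
  proof
    assume "A \<subseteq> x <# B #> inv x"
    have "L = sg_join G K A"
      using L_eq_sg_join_atom unfolding A_def .
    also have "\<dots> \<subseteq> x <# B #> inv x"
      by (rule sg_join_least[OF subgroup_conjugation_is_surj2[OF xc sB] conj_K]) fact
    finally have "x \<in> x <# B #> inv x" using x(1) by blast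
    then show False
      using mem_conj_iff[OF xc Bc xc] xc \<open>x \<notin> B\<close> by simp
  qed
  have conj_max: "maximal_subgroup G (x <# B #> inv x)"
    unfolding B_def using maximal_subgroup_conj[OF maximal_subgroup_complement[OF i(1)] xc] .
  show ?thesis
    using maximal_subgroup_eq_complement[OF conj_max _ i(1)] conj_K sK(2) conj_A
    unfolding A_def B_def by blast
qed

lemma index_two_complement: "sg_index G (carrier G) (overgroup_of (I - {i})) = 2"
proof -
  define B where "B = overgroup_of (I - {i})"
  have sK: "subgroup K G" and sL: "subgroup L G" and sB: "subgroup B G"
    using K L overgroup_of_in_overgroups[of "I - {i}"] by (simp_all add: overgroups_def B_def)
  have "K \<noteq> L" using fL i(2) by auto
  then obtain x where x: "x \<in> L" "x \<notin> K" using K_subset_L by blast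
  have xc: "x \<in> carrier G" and Bc: "B \<subseteq> carrier G"
    using x sL sB subgroup.subset by blast+
  have "x \<notin> B" using L_Int_complement x unfolding B_def by blast
  have "x \<otimes> x \<in> B"
    using index_two_mult_mem[OF sK sL K_subset_L index x x] K_subset_complement unfolding B_def by blast
  then have S: "subgroup (B \<union> (B #> x)) G"
    using subgroup_Un_rcoset[OF sB xc] complement_conj_eq[OF x] unfolding B_def by blast
  have "L = K \<union> (K #> x)"
    using sg_index_eq_two_iff[OF sK sL K_subset_L x] index by blast
  then have "L \<subseteq> B \<union> (B #> x)"
    using K_subset_complement unfolding B_def by (auto simp: r_coset_def)
  then have "sg_join G (overgroup_of {i}) B \<subseteq> B \<union> (B #> x)"
    using sg_join_least[OF S] atom_subset_L by blast
  then have "carrier G = B \<union> (B #> x)"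
    using is_complement_singleton[OF i(1)] S subgroup.subset
    unfolding is_complement_def B_def by blast
  then show ?thesis
    using sg_index_eq_two_iff[OF sB subgroup_self Bc xc \<open>x \<notin> B\<close>] unfolding B_def by blast
qed

end

end

end

theorem lemma10p8:
  fixes G :: "('a, 'b) monoid_scheme" and H K L :: "'a set"
  assumes "group G" and "finite (carrier G)"
    and "subgroup H G"
    and "boolean_interval G H"
    and "K \<in> overgroups G H" and "L \<in> overgroups G H"
    and "K \<subset> L" and "sg_index G L K = 2"
  shows "\<exists>A B. is_atom G H A \<and> L = sg_join G K A \<and> is_complement G H A B
                \<and> sg_index G (carrier G) B = 2"
proof -
  interpret group G by fact
  obtain n and f :: "'a set \<Rightarrow> nat set" where "boolean_overgroups G H {..<n} f"
    using assms(3,4)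
    unfolding boolean_interval_def boolean_overgroups_def boolean_overgroups_axioms_def
    by (metis is_group)
  then interpret boolean_overgroups G H "{..<n}" f .
  have "M = K \<or> M = L" if "M \<in> overgroups G H" "K \<subseteq> M" "M \<subseteq> L" for M
    using index_two_no_intermediate that assms(5-8) by (auto simp: overgroups_def)
  then obtain i where i: "i \<in> {..<n}" "i \<notin> f K" "f L = insert i (f K)"
    using f_covering[OF assms(5,6,7)] by blast
  show ?thesis
    using is_atom_singleton[OF i(1)] L_eq_sg_join_atom[OF assms(5,6) i]
      is_complement_singleton[OF i(1)] index_two_complement[OF assms(5,6) i assms(8)]
    by blast
qed

end
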